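(* Let $A,B \in M_n(\mathbb{R}_+)$ be two triangularizable matrices. If $G_A \subseteq G_B$ or $G_B \subseteq G_A$, then $A$ and $B$ are simultaneously triangularizable.
   Context: Max algebra: $\mathbb{R}_+$ the nonnegative reals with $a\oplus b=\max\{a,b\}$ and ordinary multiplication; for $A,B\in M_n(\mathbb{R}_+)$, $(AB)_{ij}=\max_k a_{ik}b_{kj}$. $GL_n(\mathbb{R}_+)$ is the set of matrices invertible under this product (the generalized permutation matrices). $A$ is triangularizable if $P^{-1}AP$ is upper triangular for some $P\in GL_n(\mathbb{R}_+)$; $A,B$ are simultaneously triangularizable if a single $P\in GL_n(\mathbb{R}_+)$ makes both $P^{-1}AP$ and $P^{-1}BP$ upper triangular. The digraph $G_A$ has vertices $\{1,\dots,n\}$ and an edge $i\to j$ iff $a_{ij}>0$; $G_A\subseteq G_B$ means every edge of $G_A$ is an edge of $G_B$. *)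

theory Defs
  imports Complex_Main
begin

text \<open>n x n matrices over the max algebra R_+, represented as functions
  nat => nat => real; only entries with indices < n are meaningful.\<close>

type_synonym mat = "nat \<Rightarrow> nat \<Rightarrow> real"

definition nonneg_mat :: "nat \<Rightarrow> mat \<Rightarrow> bool" where
  "nonneg_mat n A \<longleftrightarrow> (\<forall>i<n. \<forall>j<n. 0 \<le> A i j)"

definition max_mult :: "nat \<Rightarrow> mat \<Rightarrow> mat \<Rightarrow> mat" where
  "max_mult n A B = (\<lambda>i j. Max ((\<lambda>k. A i k * B k j) ` {..<n}))"

definition max_id :: mat where
  "max_id = (\<lambda>i j. if i = j then 1 else 0)"

definition mat_eq :: "nat \<Rightarrow> mat \<Rightarrow> mat \<Rightarrow> bool" where
  "mat_eq n A B \<longleftrightarrow> (\<forall>i<n. \<forall>j<n. A i j = B i j)"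

definition max_inverse :: "nat \<Rightarrow> mat \<Rightarrow> mat \<Rightarrow> bool" where
  "max_inverse n P Q \<longleftrightarrow> nonneg_mat n P \<and> nonneg_mat n Q \<and>
     mat_eq n (max_mult n P Q) max_id \<and> mat_eq n (max_mult n Q P) max_id"

definition upper_triangular :: "nat \<Rightarrow> mat \<Rightarrow> bool" where
  "upper_triangular n A \<longleftrightarrow> (\<forall>i<n. \<forall>j<n. j < i \<longrightarrow> A i j = 0)"

definition triangularizable :: "nat \<Rightarrow> mat \<Rightarrow> bool" where
  "triangularizable n A \<longleftrightarrow> (\<exists>P Q. max_inverse n P Q \<and>
      upper_triangular n (max_mult n (max_mult n Q A) P))"

definition simult_triangularizable :: "nat \<Rightarrow> mat \<Rightarrow> mat \<Rightarrow> bool" where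
  "simult_triangularizable n A B \<longleftrightarrow> (\<exists>P Q. max_inverse n P Q \<and>
      upper_triangular n (max_mult n (max_mult n Q A) P) \<and>
      upper_triangular n (max_mult n (max_mult n Q B) P))"

definition digraph :: "nat \<Rightarrow> mat \<Rightarrow> (nat \<times> nat) set" where
  "digraph n A = {(i, j). i < n \<and> j < n \<and> 0 < A i j}"

end

theory Submission
  imports Defs
begin

text \<open>Over nonnegative matrices, the digraph of a max-algebra product is the composition of
  the digraphs, so the digraph of \<open>P\<^sup>-\<^sup>1 A P\<close> is monotone in that of \<open>A\<close>. Upper triangularity
  of a nonnegative matrix is a property of its digraph alone, hence a matrix \<open>P\<close> that
  triangularizes the matrix with the larger digraph triangularizes the other one as well.\<close>

lemma max_mult_nonneg:
  assumes "nonneg_mat n X" and "nonneg_mat n Y"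
  shows "nonneg_mat n (max_mult n X Y)"
  unfolding nonneg_mat_def max_mult_def
proof (intro allI impI)
  fix i j assume "i < n" "j < n"
  then have "0 \<le> X i 0 * Y 0 j" using assms unfolding nonneg_mat_def by simp
  also have "\<dots> \<le> Max ((\<lambda>k. X i k * Y k j) ` {..<n})" using \<open>j < n\<close> by (intro Max_ge) auto
  finally show "0 \<le> Max ((\<lambda>k. X i k * Y k j) ` {..<n})" .
qed

lemma max_mult_pos_iff:
  assumes "nonneg_mat n X" and "nonneg_mat n Y" and "i < n" and "j < n"
  shows "0 < max_mult n X Y i j \<longleftrightarrow> (\<exists>k<n. 0 < X i k \<and> 0 < Y k j)"
proof -
  have "0 < max_mult n X Y i j \<longleftrightarrow> (\<exists>k<n. 0 < X i k * Y k j)"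
    unfolding max_mult_def using \<open>i < n\<close> by (subst Max_gr_iff) auto
  also have "\<dots> \<longleftrightarrow> (\<exists>k<n. 0 < X i k \<and> 0 < Y k j)"
  proof (intro ex_cong1 conj_cong refl)
    fix k assume "k < n"
    then have "0 \<le> X i k" "0 \<le> Y k j" using assms unfolding nonneg_mat_def by auto
    then show "0 < X i k * Y k j \<longleftrightarrow> 0 < X i k \<and> 0 < Y k j"
      by (auto simp: zero_less_mult_iff)
  qed
  finally show ?thesis .
qed

lemma digraph_max_mult:
  assumes "nonneg_mat n X" and "nonneg_mat n Y"
  shows "digraph n (max_mult n X Y) = digraph n X O digraph n Y"
  using max_mult_pos_iff[OF assms] unfolding digraph_def by auto

lemma upper_triangular_iff_digraph:
  assumes "nonneg_mat n M"
  shows "upper_triangular n M \<longleftrightarrow> (\<forall>(i, j) \<in> digraph n M. i \<le> j)"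
proof -
  have "M i j = 0 \<longleftrightarrow> (i, j) \<notin> digraph n M" if "i < n" "j < n" for i j
  proof -
    have "0 \<le> M i j" using assms that unfolding nonneg_mat_def by blast
    then show ?thesis using that unfolding digraph_def by auto
  qed
  moreover have "(i, j) \<in> digraph n M \<Longrightarrow> i < n \<and> j < n" for i j
    unfolding digraph_def by simp
  ultimately show ?thesis
    unfolding upper_triangular_def by (metis case_prodI2 case_prodD not_le)
qed

lemma upper_triangular_digraph_mono:
  assumes "nonneg_mat n M" and "nonneg_mat n N"
    and "digraph n M \<subseteq> digraph n N" and "upper_triangular n N"
  shows "upper_triangular n M"
  using assms by (auto simp: upper_triangular_iff_digraph)

lemma digraph_conj_mono:
  assumes "nonneg_mat n P" and "nonneg_mat n Q"
    and "nonneg_mat n A" and "nonneg_mat n B" and "digraph n A \<subseteq> digraph n B"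
  shows "digraph n (max_mult n (max_mult n Q A) P) \<subseteq> digraph n (max_mult n (max_mult n Q B) P)"
proof -
  have "digraph n (max_mult n (max_mult n Q A) P) = digraph n Q O digraph n A O digraph n P"
    using assms by (simp add: digraph_max_mult max_mult_nonneg O_assoc)
  also have "\<dots> \<subseteq> digraph n Q O digraph n B O digraph n P"
    using assms(5) by (intro relcomp_mono order.refl)
  also have "\<dots> = digraph n (max_mult n (max_mult n Q B) P)"
    using assms by (simp add: digraph_max_mult max_mult_nonneg O_assoc)
  finally show ?thesis .
qed

lemma triangularizing_digraph_mono:
  assumes PQ: "max_inverse n P Q" and A: "nonneg_mat n A" and B: "nonneg_mat n B"
    and sub: "digraph n A \<subseteq> digraph n B"
    and ut: "upper_triangular n (max_mult n (max_mult n Q B) P)"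
  shows "upper_triangular n (max_mult n (max_mult n Q A) P)"
proof -
  have P: "nonneg_mat n P" and Q: "nonneg_mat n Q"
    using PQ unfolding max_inverse_def by auto
  show ?thesis
    using upper_triangular_digraph_mono[OF max_mult_nonneg[OF max_mult_nonneg[OF Q A] P]
        max_mult_nonneg[OF max_mult_nonneg[OF Q B] P] digraph_conj_mono[OF P Q A B sub] ut] .
qed

theorem corollary3p4:
  fixes n :: nat and A B :: mat
  assumes "nonneg_mat n A" and "nonneg_mat n B"
    and "triangularizable n A" and "triangularizable n B"
    and "digraph n A \<subseteq> digraph n B \<or> digraph n B \<subseteq> digraph n A"
  shows "simult_triangularizable n A B"
  using assms(5)
proof
  assume sub: "digraph n A \<subseteq> digraph n B"
  obtain P Q where PQ: "max_inverse n P Q"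
    and ut: "upper_triangular n (max_mult n (max_mult n Q B) P)"
    using assms(4) unfolding triangularizable_def by blast
  show ?thesis
    unfolding simult_triangularizable_def
    using PQ ut triangularizing_digraph_mono[OF PQ assms(1,2) sub ut] by blast
next
  assume sub: "digraph n B \<subseteq> digraph n A"
  obtain P Q where PQ: "max_inverse n P Q"
    and ut: "upper_triangular n (max_mult n (max_mult n Q A) P)"
    using assms(3) unfolding triangularizable_def by blast
  show ?thesis
    unfolding simult_triangularizable_def
    using PQ ut triangularizing_digraph_mono[OF PQ assms(2,1) sub ut] by blast
qed

end
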